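(* Let $M=\mathbb{CP}^2\#k\overline{\mathbb{CP}^2}$ with $k\ge1$ and $A\in H_2(M;\mathbb Z)$ with $A\cdot A=-4$. Then, up to $D(M)$-equivalence, either $A$ is a reduced class (which can occur only when $k\ge3$), or $A$ is one of $-H+2E_1-E_2$, $2E_1$, $2(H-E_1-E_2)$, $H-E_1-\cdots-E_5$.
   Context: $\{H,E_1,\dots,E_k\}$ is the standard basis of $H_2(M;\mathbb Z)$ ($H^2=1$, $E_i^2=-1$, pairwise orthogonal). $D(M)$ is the group of automorphisms of $H_2(M;\mathbb Z)$ induced by orientation-preserving diffeomorphisms of $M$; $A,B$ are $D(M)$-equivalent if $\sigma(A)=B$ for some $\sigma\in D(M)$. A class $A=aH-\sum_{i=1}^k b_iE_i$ is reduced if $b_1\ge b_2\ge\cdots\ge b_k\ge0$ and $a\ge b_1+b_2+b_3$. *)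

theory Defs
  imports Main
begin

text \<open>A homology class A = a H - (sum over i=1..k of b_i E_i) in H_2(M;Z),
  M = CP^2 # k (-CP^2), is represented by the pair (a, b) with b :: nat => int,
  where b 0 = 0 and b i = 0 for i > k.\<close>

type_synonym cls = "int \<times> (nat \<Rightarrow> int)"

definition valid :: "nat \<Rightarrow> cls \<Rightarrow> bool" where
  "valid k x \<longleftrightarrow> snd x 0 = 0 \<and> (\<forall>i>k. snd x i = 0)"

definition ip :: "nat \<Rightarrow> cls \<Rightarrow> cls \<Rightarrow> int" where
  "ip k x y = fst x * fst y - (\<Sum>i=1..k. snd x i * snd y i)"

definition clsH :: cls where "clsH = (1, \<lambda>_. 0)"
definition clsE :: "nat \<Rightarrow> cls" where "clsE i = (0, \<lambda>j. if j = i then -1 else 0)"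

definition cadd :: "cls \<Rightarrow> cls \<Rightarrow> cls" where
  "cadd x y = (fst x + fst y, \<lambda>i. snd x i + snd y i)"
definition csmul :: "int \<Rightarrow> cls \<Rightarrow> cls" where
  "csmul c x = (c * fst x, \<lambda>i. c * snd x i)"
definition csub :: "cls \<Rightarrow> cls \<Rightarrow> cls" where
  "csub x y = cadd x (csmul (-1) y)"

text \<open>Reflection in a class v (used for v.v in {1,-1,-2}, where it is integral):
  x |-> x - (2 (x.v)/(v.v)) v.\<close>
definition refl :: "nat \<Rightarrow> cls \<Rightarrow> cls \<Rightarrow> cls" where
  "refl k v x = cadd x (csmul (- ((2 * ip k x v) div ip k v v)) v)"

text \<open>Reflections in classes represented by embedded spheres of square +1, -1, -2 in M;
  these are induced by orientation-preserving diffeomorphisms, hence lie in D(M).\<close>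
definition sphere_refl :: "nat \<Rightarrow> (cls \<Rightarrow> cls) \<Rightarrow> bool" where
  "sphere_refl k \<sigma> \<longleftrightarrow> (\<exists>v. \<sigma> = refl k v \<and>
     (v = clsH
      \<or> (\<exists>i. 1 \<le> i \<and> i \<le> k \<and> v = clsE i)
      \<or> (\<exists>i j. 1 \<le> i \<and> i \<le> k \<and> 1 \<le> j \<and> j \<le> k \<and> i \<noteq> j \<and> v = csub (clsE i) (clsE j))
      \<or> (\<exists>i j. 1 \<le> i \<and> i \<le> k \<and> 1 \<le> j \<and> j \<le> k \<and> i \<noteq> j \<and>
            v = csub (csub clsH (clsE i)) (clsE j))
      \<or> (\<exists>i j l. 1 \<le> i \<and> i \<le> k \<and> 1 \<le> j \<and> j \<le> k \<and> 1 \<le> l \<and> l \<le> k \<and>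
            i \<noteq> j \<and> i \<noteq> l \<and> j \<noteq> l \<and>
            v = csub (csub (csub clsH (clsE i)) (clsE j)) (clsE l))))"

definition reduced :: "nat \<Rightarrow> cls \<Rightarrow> bool" where
  "reduced k x \<longleftrightarrow>
     (\<forall>i j. 1 \<le> i \<longrightarrow> i \<le> j \<longrightarrow> j \<le> k \<longrightarrow> snd x j \<le> snd x i) \<and>
     (\<forall>i. 1 \<le> i \<longrightarrow> i \<le> k \<longrightarrow> 0 \<le> snd x i) \<and>
     fst x \<ge> snd x 1 + snd x 2 + snd x 3"

definition cls_A1 :: cls where  (* -H + 2E_1 - E_2 *)
  "cls_A1 = (-1, \<lambda>i. if i = 1 then -2 else if i = 2 then 1 else 0)"
definition cls_A2 :: cls where  (* 2E_1 *)
  "cls_A2 = (0, \<lambda>i. if i = 1 then -2 else 0)"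
definition cls_A3 :: cls where  (* 2(H - E_1 - E_2) *)
  "cls_A3 = (2, \<lambda>i. if i = 1 \<or> i = 2 then 2 else 0)"
definition cls_A4 :: cls where  (* H - E_1 - ... - E_5 *)
  "cls_A4 = (1, \<lambda>i. if 1 \<le> i \<and> i \<le> 5 then 1 else 0)"

end

theory Submission
  imports Defs
begin

text \<open>
  Instead of
  working with the unknown group \<open>D\<close> directly we use the relation \<open>reach k\<close>: the reflexive
  transitive closure of "apply one sphere reflection".  Every chain of reflections is realised
  by an element of \<open>D\<close> (reflections lie in \<open>D\<close>, \<open>D\<close> is closed under composition, and the
  identity is the square of the reflection in \<open>H\<close>), and reflections preserve validity and
  the intersection form.

  The proof is a descent on \<open>|a|\<close>.  First every class reaches a normal class
  (\<open>a \<ge> 0\<close>, \<open>b\<^sub>1 \<ge> b\<^sub>2 \<ge> ... \<ge> 0\<close>) with the same \<open>|a|\<close>, using reflections in \<open>H\<close>,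
  in \<open>E\<^sub>i\<close> and in \<open>E\<^sub>i - E\<^sub>i\<^sub>+\<^sub>1\<close> (a bubble sort).  For a normal class with
  \<open>a\<^sup>2 + 4 = \<Sum> b\<^sub>i\<^sup>2\<close> and \<open>s = b\<^sub>1 + b\<^sub>2 + b\<^sub>3\<close> there are three regimes when \<open>k \<ge> 3\<close>:
  \<open>s \<le> a\<close> (the class is reduced), \<open>a < s < 3a\<close> (the Cremona reflection in
  \<open>H - E\<^sub>1 - E\<^sub>2 - E\<^sub>3\<close> strictly decreases \<open>|a|\<close>), and \<open>s \<ge> 3a\<close>, where a Cauchy-Schwarz
  bound leaves finitely many coefficient patterns, each of which reaches one of the four
  exceptional classes.  For \<open>k \<le> 2\<close> the reflection in \<open>H - E\<^sub>1 - E\<^sub>2\<close> plays the role of the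
  Cremona reflection.
\<close>

lemma fst_clsH [simp]: "fst clsH = 1"
  and snd_clsH [simp]: "snd clsH i = 0"
  by (simp_all add: clsH_def)

lemma fst_clsE [simp]: "fst (clsE j) = 0"
  and snd_clsE [simp]: "snd (clsE j) i = (if i = j then -1 else 0)"
  by (simp_all add: clsE_def)

lemma fst_csub [simp]: "fst (csub x y) = fst x - fst y"
  and snd_csub [simp]: "snd (csub x y) i = snd x i - snd y i"
  by (simp_all add: csub_def cadd_def csmul_def)

lemma ip_sym: "ip k x y = ip k y x"
  unfolding ip_def by (simp add: mult.commute)

lemma ip_cadd_right: "ip k x (cadd u v) = ip k x u + ip k x v"
  unfolding ip_def cadd_def by (simp add: distrib_left sum.distrib)

lemma ip_csmul_right: "ip k x (csmul c v) = c * ip k x v"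
  unfolding ip_def csmul_def by (simp add: sum_distrib_left algebra_simps)

lemma ip_csub_right: "ip k x (csub u v) = ip k x u - ip k x v"
  unfolding csub_def by (simp add: ip_cadd_right ip_csmul_right)

lemma ip_clsH_right: "ip k x clsH = fst x"
  by (simp add: ip_def)

lemma ip_clsE_right: "1 \<le> i \<Longrightarrow> i \<le> k \<Longrightarrow> ip k x (clsE i) = snd x i"
  by (simp add: ip_def clsE_def mult.commute[of "snd x _"] if_distrib cong: if_cong)

text \<open>Expansion of the square of \<open>x + c v\<close>; this is all that is needed to see that
  reflections in classes of square \<open>1\<close>, \<open>-1\<close>, \<open>-2\<close> are isometries.\<close>

lemma ip_translate:
  "ip k (cadd x (csmul c v)) (cadd x (csmul c v)) = ip k x x + 2 * c * ip k x v + c\<^sup>2 * ip k v v"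
proof -
  have left: "ip k (cadd u w) y = ip k u y + ip k w y" "ip k (csmul c w) y = c * ip k w y" for u w y
    by (simp_all add: ip_sym[of k _ y] ip_cadd_right ip_csmul_right)
  show ?thesis
    by (simp add: left ip_cadd_right ip_csmul_right ip_sym[of k v x] power2_eq_square algebra_simps)
qed

lemma ip_refl:
  assumes "ip k v v \<in> {1, -1, -2}"
  shows "ip k (refl k v x) (refl k v x) = ip k x x"
  using assms unfolding refl_def ip_translate by (auto simp: power2_eq_square)

lemma valid_refl: "valid k v \<Longrightarrow> valid k x \<Longrightarrow> valid k (refl k v x)"
  unfolding valid_def refl_def cadd_def csmul_def by simp

lemma sphere_vector:
  assumes "sphere_refl k \<sigma>"
  obtains v where "\<sigma> = refl k v" "valid k v" "ip k v v \<in> {1, -1, -2}"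
  using assms unfolding sphere_refl_def
  by (elim exE conjE disjE) (auto intro!: that simp: valid_def ip_csub_right ip_clsH_right ip_clsE_right)

definition sphere_step :: "nat \<Rightarrow> cls \<Rightarrow> cls \<Rightarrow> bool" where
  "sphere_step k x y \<longleftrightarrow> (\<exists>\<sigma>. sphere_refl k \<sigma> \<and> y = \<sigma> x)"

abbreviation reach :: "nat \<Rightarrow> cls \<Rightarrow> cls \<Rightarrow> bool" where
  "reach k \<equiv> (sphere_step k)\<^sup>*\<^sup>*"

lemma reach_invariant:
  assumes "reach k x y" and "valid k x"
  shows "valid k y \<and> ip k y y = ip k x x"
  using assms
proof (induction rule: rtranclp_induct)
  case (step y z)
  then obtain v where "z = refl k v y" "valid k v" "ip k v v \<in> {1, -1, -2}"
    using sphere_vector unfolding sphere_step_def by metis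
  then show ?case using step by (simp add: valid_refl ip_refl)
qed simp

text \<open>The reflection in \<open>H\<close> changes the sign of \<open>a\<close>; it is an involution, which
  provides the identity in \<open>D\<close>.\<close>

lemma refl_clsH: "refl k clsH x = (- fst x, snd x)"
  by (simp add: refl_def ip_clsH_right cadd_def csmul_def)

lemma sphere_refl_clsH: "sphere_refl k (refl k clsH)"
  unfolding sphere_refl_def by blast

lemma reach_realized:
  assumes refl_in: "\<And>\<sigma>. sphere_refl k \<sigma> \<Longrightarrow> \<sigma> \<in> D"
    and comp_in: "\<And>\<sigma> \<tau>. \<sigma> \<in> D \<Longrightarrow> \<tau> \<in> D \<Longrightarrow> \<sigma> \<circ> \<tau> \<in> D"
    and "reach k x y"
  shows "\<exists>\<sigma>\<in>D. \<sigma> x = y"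
  using \<open>reach k x y\<close>
proof (induction rule: rtranclp_induct)
  case base
  have "refl k clsH \<circ> refl k clsH \<in> D" by (intro comp_in refl_in sphere_refl_clsH)
  moreover have "(refl k clsH \<circ> refl k clsH) x = x" by (simp add: refl_clsH)
  ultimately show ?case by blast
next
  case (step y z)
  then obtain \<sigma> \<tau> where "\<sigma> \<in> D" "\<sigma> x = y" "sphere_refl k \<tau>" "z = \<tau> y"
    unfolding sphere_step_def by blast
  then show ?case using comp_in refl_in by (intro bexI[of _ "\<tau> \<circ> \<sigma>"]) auto
qed

lemma reach_by_refl: "sphere_refl k (refl k v) \<Longrightarrow> refl k v x = y \<Longrightarrow> reach k x y"
  unfolding sphere_step_def by blast

lemma reach_flip_H: "reach k (a, b) (- a, b)"
  using reach_by_refl[OF sphere_refl_clsH refl_clsH[of k "(a, b)"]] by simp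

lemma reach_flip_E:
  assumes "1 \<le> i" "i \<le> k"
  shows "reach k (a, b) (a, b(i := - b i))"
proof (rule reach_by_refl)
  show "sphere_refl k (refl k (clsE i))"
    unfolding sphere_refl_def using assms by blast
  show "refl k (clsE i) (a, b) = (a, b(i := - b i))"
    using assms by (simp add: refl_def ip_clsE_right cadd_def csmul_def fun_eq_iff)
qed

lemma reach_swap:
  assumes "1 \<le> i" "i \<le> k" "1 \<le> j" "j \<le> k" "i \<noteq> j"
  shows "reach k (a, b) (a, b(i := b j, j := b i))"
proof (rule reach_by_refl)
  show "sphere_refl k (refl k (csub (clsE i) (clsE j)))"
    unfolding sphere_refl_def using assms by blast
  show "refl k (csub (clsE i) (clsE j)) (a, b) = (a, b(i := b j, j := b i))"
    using assms
    by (simp add: refl_def ip_csub_right ip_clsE_right cadd_def csmul_def fun_eq_iff)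
qed

lemma reach_line:
  fixes a :: int and b :: "nat \<Rightarrow> int"
  assumes "1 \<le> i" "i \<le> k" "1 \<le> j" "j \<le> k" "i \<noteq> j"
  defines "d \<equiv> a - b i - b j"
  shows "reach k (a, b) (a + 2 * d, \<lambda>m. if m = i \<or> m = j then b m + 2 * d else b m)"
proof (rule reach_by_refl)
  show "sphere_refl k (refl k (csub (csub clsH (clsE i)) (clsE j)))"
    unfolding sphere_refl_def using assms by blast
  show "refl k (csub (csub clsH (clsE i)) (clsE j)) (a, b) =
      (a + 2 * d, \<lambda>m. if m = i \<or> m = j then b m + 2 * d else b m)"
    using assms
    by (simp add: refl_def ip_csub_right ip_clsH_right ip_clsE_right cadd_def csmul_def fun_eq_iff)
qed

lemma reach_cremona:
  fixes a :: int and b :: "nat \<Rightarrow> int"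
  assumes "1 \<le> i" "i \<le> k" "1 \<le> j" "j \<le> k" "1 \<le> l" "l \<le> k" "i \<noteq> j" "i \<noteq> l" "j \<noteq> l"
  defines "d \<equiv> a - b i - b j - b l"
  shows "reach k (a, b) (a + d, \<lambda>m. if m = i \<or> m = j \<or> m = l then b m + d else b m)"
proof (rule reach_by_refl)
  show "sphere_refl k (refl k (csub (csub (csub clsH (clsE i)) (clsE j)) (clsE l)))"
    unfolding sphere_refl_def using assms by blast
  show "refl k (csub (csub (csub clsH (clsE i)) (clsE j)) (clsE l)) (a, b) =
      (a + d, \<lambda>m. if m = i \<or> m = j \<or> m = l then b m + d else b m)"
    using assms
    by (simp add: refl_def ip_csub_right ip_clsH_right ip_clsE_right cadd_def csmul_def fun_eq_iff)
qed

lemma reach_abs_E: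
  assumes "1 \<le> i" "i \<le> k"
  shows "reach k x (fst x, (snd x)(i := \<bar>snd x i\<bar>))"
proof (cases "snd x i < 0")
  case True
  then show ?thesis using reach_flip_E[OF assms, of "fst x" "snd x"] by simp
next
  case False
  then show ?thesis by simp
qed

lemma reach_abs_coords:
  assumes "valid k x"
  shows "reach k x (fst x, \<lambda>i. \<bar>snd x i\<bar>)"
proof -
  have partial: "reach k x (fst x, \<lambda>i. if i \<in> S then \<bar>snd x i\<bar> else snd x i)"
    if "S \<subseteq> {1..k}" for S
    using finite_subset[OF that finite_atLeastAtMost] that
  proof (induction S rule: finite_subset_induct)
    case (insert j S)
    let ?y = "(fst x, \<lambda>i. if i \<in> S then \<bar>snd x i\<bar> else snd x i)"
    have "(fst ?y, (snd ?y)(j := \<bar>snd ?y j\<bar>)) =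
        (fst x, \<lambda>i. if i \<in> insert j S then \<bar>snd x i\<bar> else snd x i)"
      using insert.hyps by (auto simp: fun_eq_iff)
    then have "reach k ?y (fst x, \<lambda>i. if i \<in> insert j S then \<bar>snd x i\<bar> else snd x i)"
      using reach_abs_E[of j k ?y] insert.hyps by simp
    then show ?case by (rule rtranclp_trans[OF insert.IH])
  qed simp
  have outside: "(\<lambda>i. if i \<in> {1..k} then \<bar>snd x i\<bar> else snd x i) = (\<lambda>i. \<bar>snd x i\<bar>)"
    using assms by (auto simp: valid_def fun_eq_iff Suc_le_eq)
  show ?thesis using partial[OF order_refl] unfolding outside .
qed

lemma antitone_from_adjacent:
  fixes b :: "nat \<Rightarrow> int"
  assumes adjacent: "\<forall>n. 1 \<le> n \<longrightarrow> n < k \<longrightarrow> b (Suc n) \<le> b n"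
    and zero: "\<forall>n>k. b n = 0" and nonneg: "\<forall>n. 0 \<le> b n"
    and "1 \<le> i" "i \<le> j"
  shows "b j \<le> b i"
  using \<open>i \<le> j\<close>
proof (induction j rule: dec_induct)
  case (step n)
  show ?case
  proof (cases "Suc n \<le> k")
    case True
    then have "b (Suc n) \<le> b n" using adjacent step.hyps(1) \<open>1 \<le> i\<close> by simp
    then show ?thesis using step.IH by linarith
  next
    case False
    then show ?thesis using zero nonneg by simp
  qed
qed simp

text \<open>The potential of the bubble sort: swapping an adjacent inversion lowers it.\<close>

definition weight :: "nat \<Rightarrow> (nat \<Rightarrow> int) \<Rightarrow> int" where
  "weight k b = (\<Sum>j=1..k. int j * b j)"

lemma weight_swap:
  assumes "1 \<le> i" "i < k"
  shows "weight k (b(i := b (Suc i), Suc i := b i)) = weight k b + (b i - b (Suc i))"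
proof -
  let ?c = "b(i := b (Suc i), Suc i := b i)"
  let ?R = "{1..k} - {i} - {Suc i}"
  have split: "weight k f = int i * f i + int (Suc i) * f (Suc i) + (\<Sum>j\<in>?R. int j * f j)" for f
  proof -
    have "weight k f = int i * f i + (\<Sum>j\<in>{1..k} - {i}. int j * f j)"
      unfolding weight_def using assms by (intro sum.remove) auto
    also have "(\<Sum>j\<in>{1..k} - {i}. int j * f j) = int (Suc i) * f (Suc i) + (\<Sum>j\<in>?R. int j * f j)"
      using assms by (intro sum.remove) auto
    finally show ?thesis by simp
  qed
  have "(\<Sum>j\<in>?R. int j * ?c j) = (\<Sum>j\<in>?R. int j * b j)" by (rule sum.cong) auto
  then show ?thesis using split[of ?c] split[of b] by (simp add: algebra_simps)
qed

lemma weight_nonneg: "\<forall>n. 0 \<le> b n \<Longrightarrow> 0 \<le> weight k b"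
  unfolding weight_def by (simp add: sum_nonneg)

lemma reach_sorted:
  assumes "valid k x" "\<forall>i. 0 \<le> snd x i"
  shows "\<exists>y. reach k x y \<and> fst y = fst x \<and> (\<forall>i. 0 \<le> snd y i) \<and>
    (\<forall>i j. 1 \<le> i \<longrightarrow> i \<le> j \<longrightarrow> snd y j \<le> snd y i)"
  using assms
proof (induction "nat (weight k (snd x))" arbitrary: x rule: less_induct)
  case less
  show ?case
  proof (cases "\<exists>i. 1 \<le> i \<and> i < k \<and> snd x i < snd x (Suc i)")
    case True
    then obtain i where i: "1 \<le> i" "i < k" "snd x i < snd x (Suc i)" by blast
    let ?c = "(snd x)(i := snd x (Suc i), Suc i := snd x i)"
    let ?x' = "(fst x, ?c)"
    have swap: "reach k x ?x'" using reach_swap[of i k "Suc i" "fst x" "snd x"] i by simp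
    have valid': "valid k ?x'" using reach_invariant[OF swap less.prems(1)] by simp
    have nonneg: "\<forall>j. 0 \<le> ?c j" using less.prems(2) by simp
    have "nat (weight k (snd ?x')) < nat (weight k (snd x))"
    proof -
      have "weight k ?c = weight k (snd x) + (snd x i - snd x (Suc i))"
        by (rule weight_swap[OF i(1,2)])
      moreover have "0 \<le> weight k ?c" by (rule weight_nonneg[OF nonneg])
      ultimately show ?thesis unfolding snd_conv zless_nat_conj using i(3) by linarith
    qed
    from less.hyps[OF this valid'] nonneg obtain y where "reach k ?x' y" "fst y = fst x"
      "\<forall>i. 0 \<le> snd y i" "\<forall>i j. 1 \<le> i \<longrightarrow> i \<le> j \<longrightarrow> snd y j \<le> snd y i"
      by (auto simp del: fun_upd_apply)
    then show ?thesis using rtranclp_trans[OF swap] by blast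
  next
    case False
    then have "\<forall>n. 1 \<le> n \<longrightarrow> n < k \<longrightarrow> snd x (Suc n) \<le> snd x n" using not_less by blast
    moreover have "\<forall>n>k. snd x n = 0" using less.prems(1) by (simp add: valid_def)
    ultimately show ?thesis using less.prems(2) antitone_from_adjacent[of k "snd x"] by blast
  qed
qed

definition normal :: "cls \<Rightarrow> bool" where
  "normal y \<longleftrightarrow> 0 \<le> fst y \<and> (\<forall>i. 0 \<le> snd y i) \<and> (\<forall>i j. 1 \<le> i \<longrightarrow> i \<le> j \<longrightarrow> snd y j \<le> snd y i)"

lemma reach_normal:
  assumes "valid k x"
  obtains y where "reach k x y" "fst y = \<bar>fst x\<bar>" "normal y"
proof -
  let ?x1 = "(\<bar>fst x\<bar>, snd x)" and ?x2 = "(\<bar>fst x\<bar>, \<lambda>i. \<bar>snd x i\<bar>)"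
  have abs_fst: "reach k x ?x1"
  proof (cases "fst x < 0")
    case True
    then show ?thesis using reach_flip_H[of k "fst x" "snd x"] by simp
  next
    case False
    then show ?thesis by simp
  qed
  have abs_snd: "reach k ?x1 ?x2"
    using reach_abs_coords[of k ?x1] assms by (simp add: valid_def)
  have "valid k ?x2" "\<forall>i. 0 \<le> snd ?x2 i" using assms by (simp_all add: valid_def)
  from reach_sorted[OF this] obtain y where y: "reach k ?x2 y" "fst y = fst ?x2"
    "\<forall>i. 0 \<le> snd y i" "\<forall>i j. 1 \<le> i \<longrightarrow> i \<le> j \<longrightarrow> snd y j \<le> snd y i"
    by blast
  show thesis
  proof (rule that)
    show "reach k x y" using rtranclp_trans[OF rtranclp_trans[OF abs_fst abs_snd] y(1)] .
    show "fst y = \<bar>fst x\<bar>" "normal y" using y by (simp_all add: normal_def)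
  qed
qed

lemma square_bound:
  fixes x m :: int
  assumes "0 \<le> m" "x * x < m * m"
  shows "x < m"
proof (rule ccontr)
  assume "\<not> x < m"
  then have "m * m \<le> x * x" using assms(1) by (intro mult_mono) auto
  then show False using assms(2) by simp
qed

text \<open>If \<open>3a \<le> b\<^sub>1 + b\<^sub>2 + b\<^sub>3\<close>, Cauchy-Schwarz gives \<open>9a\<^sup>2 \<le> 3(a\<^sup>2 + 4)\<close>; the remaining
  patterns (\<open>T\<close> is the square sum of the tail \<open>b\<^sub>4, b\<^sub>5, ...\<close>) are listed.\<close>

lemma exceptional_triples:
  fixes a b1 b2 b3 T :: int
  assumes "0 \<le> a" "0 \<le> b3" "b3 \<le> b2" "b2 \<le> b1" "3 * a \<le> b1 + b2 + b3"
    and eq: "a * a + 4 = b1 * b1 + b2 * b2 + b3 * b3 + T"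
    and "0 \<le> T" "b3 = 0 \<Longrightarrow> T = 0"
  shows "(a = 0 \<and> b1 = 2 \<and> b2 = 0 \<and> b3 = 0 \<and> T = 0) \<or> (a = 0 \<and> b1 = 1 \<and> b2 = 1 \<and> b3 = 1 \<and> T = 1)
       \<or> (a = 1 \<and> b1 = 2 \<and> b2 = 1 \<and> b3 = 0 \<and> T = 0) \<or> (a = 1 \<and> b1 = 1 \<and> b2 = 1 \<and> b3 = 1 \<and> T = 2)"
proof -
  define S where "S = b1 + b2 + b3"
  define Q where "Q = b1 * b1 + b2 * b2 + b3 * b3"
  have "3 * Q - S * S = (b1 - b2) * (b1 - b2) + (b1 - b3) * (b1 - b3) + (b2 - b3) * (b2 - b3)"
    unfolding S_def Q_def by (simp add: algebra_simps)
  then have cauchy_schwarz: "S * S \<le> 3 * Q" by (smt (verit) zero_le_square)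
  have "(3 * a) * (3 * a) \<le> S * S" using assms unfolding S_def by (intro mult_mono) auto
  moreover have "(3 * a) * (3 * a) = 9 * (a * a)" by simp
  ultimately have "a * a < 2 * 2" using cauchy_schwarz eq \<open>0 \<le> T\<close> unfolding Q_def by (smt (verit))
  then have a: "a < 2" by (rule square_bound[rotated]) simp
  have "b1 * b1 < 3 * 3" using eq \<open>0 \<le> T\<close> \<open>a * a < 2 * 2\<close> zero_le_square[of b2] zero_le_square[of b3]
    by linarith
  then have b1: "b1 < 3" by (rule square_bound[rotated]) simp
  have "a = 0 \<or> a = 1" "b1 = 0 \<or> b1 = 1 \<or> b1 = 2" "b2 = 0 \<or> b2 = 1 \<or> b2 = 2" "b3 = 0 \<or> b3 = 1 \<or> b3 = 2"
    using a b1 assms by linarith+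
  then show ?thesis using assms by (elim disjE) simp_all
qed

lemma exceptional_pairs:
  fixes a b1 b2 :: int
  assumes "0 \<le> a" "0 \<le> b2" "b2 \<le> b1" "2 * a \<le> b1 + b2" and eq: "a * a + 4 = b1 * b1 + b2 * b2"
  shows "(a = 0 \<and> b1 = 2 \<and> b2 = 0) \<or> (a = 1 \<and> b1 = 2 \<and> b2 = 1) \<or> (a = 2 \<and> b1 = 2 \<and> b2 = 2)"
proof -
  have "(2 * a) * (2 * a) \<le> (b1 + b2) * (b1 + b2)" using assms by (intro mult_mono) auto
  moreover have "(b1 + b2) * (b1 + b2) \<le> 2 * (b1 * b1 + b2 * b2)"
    using zero_le_square[of "b1 - b2"] by (simp add: algebra_simps)
  moreover have "(2 * a) * (2 * a) = 4 * (a * a)" by simp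
  ultimately have "a * a \<le> 4" using eq by (smt (verit))
  then have a: "a < 3" using square_bound[of 3 a] by simp
  have "b1 * b1 < 3 * 3" using eq \<open>a * a \<le> 4\<close> zero_le_square[of b2] by linarith
  then have b1: "b1 < 3" by (rule square_bound[rotated]) simp
  have "a = 0 \<or> a = 1 \<or> a = 2" "b1 = 0 \<or> b1 = 1 \<or> b1 = 2" "b2 = 0 \<or> b2 = 1 \<or> b2 = 2"
    using a b1 assms by linarith+
  then show ?thesis using assms by (elim disjE) simp_all
qed

lemma sum_first_three:
  fixes f :: "nat \<Rightarrow> int"
  assumes "\<forall>i>k. f i = 0"
  shows "(\<Sum>i=1..k. f i) = f 1 + f 2 + f 3 + (\<Sum>i=4..k. f i)"
proof -
  have extend: "(\<Sum>i=1..k. f i) = (\<Sum>i=1..k+3. f i)" "(\<Sum>i=4..k. f i) = (\<Sum>i=4..k+3. f i)"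
    by (rule sum.mono_neutral_left; use assms in auto)+
  have peel: "(\<Sum>i=n..k+3. f i) = f n + (\<Sum>i=Suc n..k+3. f i)" if "n \<le> 3" for n
    using that by (intro sum.atLeast_Suc_atMost) simp
  show ?thesis using extend peel[of 1] peel[of 2] peel[of 3] by (simp add: numeral_eq_Suc)
qed

lemma sorted_unit_tail:
  fixes b :: "nat \<Rightarrow> int"
  assumes nonneg: "\<forall>i. 0 \<le> b i" and zero: "\<forall>i>k. b i = 0"
    and antitone: "\<forall>i j. m \<le> i \<longrightarrow> i \<le> j \<longrightarrow> b j \<le> b i"
    and top: "b m \<le> 1" and squares: "(\<Sum>i=m..k. b i * b i) = int n"
  shows "\<forall>i\<ge>m. b i = (if i < m + n then 1 else 0)"
  using antitone top squares
proof (induction n arbitrary: m)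
  case 0
  then have vanish: "\<forall>i\<in>{m..k}. b i * b i = 0"
    using sum_nonneg_eq_0_iff[of "{m..k}" "\<lambda>i. b i * b i"] by simp
  show ?case
  proof (intro allI impI)
    fix i assume "m \<le> i"
    then show "b i = (if i < m + 0 then 1 else 0)"
      using vanish zero by (cases "i \<le> k") auto
  qed
next
  case (Suc n)
  have "m \<le> k" using Suc.prems(3) by (cases "m \<le> k") auto
  have "b m \<noteq> 0"
  proof
    assume "b m = 0"
    have "b i * b i = 0" if "i \<in> {m..k}" for i
    proof -
      have "b i \<le> b m" "0 \<le> b i" using Suc.prems(1) nonneg that by auto
      then show ?thesis using \<open>b m = 0\<close> by simp
    qed
    then show False using Suc.prems(3) by simp
  qed
  then have bm: "b m = 1" using Suc.prems(2) nonneg[rule_format, of m] by linarith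
  have "(\<Sum>i=m..k. b i * b i) = b m * b m + (\<Sum>i=Suc m..k. b i * b i)"
    by (rule sum.atLeast_Suc_atMost[OF \<open>m \<le> k\<close>])
  then have "(\<Sum>i=Suc m..k. b i * b i) = int n" using Suc.prems(3) bm by simp
  moreover have "b (Suc m) \<le> 1" using Suc.prems(1) bm by force
  moreover have "\<forall>i j. Suc m \<le> i \<longrightarrow> i \<le> j \<longrightarrow> b j \<le> b i" using Suc.prems(1) by simp
  ultimately have rest: "\<forall>i\<ge>Suc m. b i = (if i < Suc m + n then 1 else 0)" using Suc.IH by blast
  show ?case
  proof (intro allI impI)
    fix i assume "m \<le> i"
    then consider "i = m" | "Suc m \<le> i" by linarith
    then show "b i = (if i < m + Suc n then 1 else 0)"
      by cases (use bm rest in auto)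
  qed
qed

lemma reach_cls_A2:
  assumes "1 \<le> k"
  shows "reach k (0, \<lambda>i. if i = 1 then 2 else 0) cls_A2"
  by (rule back_subst[of "reach k _"], rule reach_flip_E[of 1])
    (use assms in \<open>auto simp: cls_A2_def fun_eq_iff\<close>)

lemma reach_cls_A1_from_line:
  assumes "2 \<le> k"
  shows "reach k (1, \<lambda>i. if i = 1 then 2 else if i = 2 then 1 else 0) cls_A1"
proof -
  let ?b = "\<lambda>i::nat. if i = 1 then 2 else if i = 2 then 1 else (0::int)"
  have "reach k (1, ?b) (-1, ?b)" using reach_flip_H[of k 1 ?b] by simp
  also have "reach k (-1, ?b) cls_A1"
    by (rule back_subst[of "reach k _"], rule reach_flip_E[of 1])
      (use assms in \<open>auto simp: cls_A1_def fun_eq_iff\<close>)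
  finally show ?thesis .
qed

lemma reach_cls_A1_from_four:
  assumes "4 \<le> k"
  shows "reach k (0, \<lambda>i. if 1 \<le> i \<and> i \<le> 4 then 1 else 0) cls_A1"
proof -
  have "reach k (0, \<lambda>i. if 1 \<le> i \<and> i \<le> 4 then 1 else 0)
      (-3, \<lambda>i. if 1 \<le> i \<and> i \<le> 3 then -2 else if i = 4 then 1 else 0)"
    by (rule back_subst[of "reach k _"], rule reach_cremona[of 1 k 2 3])
      (use assms in \<open>auto simp: fun_eq_iff\<close>)
  also have "reach k \<dots> (-1, \<lambda>i. if i = 3 then -2 else if i = 4 then 1 else 0)"
    by (rule back_subst[of "reach k _"], rule reach_line[of 1 k 2])
      (use assms in \<open>auto simp: fun_eq_iff\<close>)
  also have "reach k \<dots> (-1, \<lambda>i. if i = 1 then -2 else if i = 4 then 1 else 0)"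
    by (rule back_subst[of "reach k _"], rule reach_swap[of 1 k 3])
      (use assms in \<open>auto simp: fun_eq_iff\<close>)
  also have "reach k \<dots> cls_A1"
    by (rule back_subst[of "reach k _"], rule reach_swap[of 2 k 4])
      (use assms in \<open>auto simp: fun_eq_iff cls_A1_def\<close>)
  finally show ?thesis .
qed

definition standard_form :: "nat \<Rightarrow> cls \<Rightarrow> bool" where
  "standard_form k y \<longleftrightarrow>
     (reduced k y \<and> k \<ge> 3) \<or> y = cls_A1 \<or> y = cls_A2 \<or> y = cls_A3 \<or> y = cls_A4"

text \<open>The exceptional patterns found below all reach a standard form; the patterns with
  \<open>b\<^sub>2 \<noteq> 0\<close> or \<open>b\<^sub>4 \<noteq> 0\<close> can only be valid when \<open>k\<close> is large enough.\<close>

lemma exceptional_reach_standard: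
  assumes k: "1 \<le> k" and valid: "valid k (a, b)"
    and shape: "(a, b) = (0, \<lambda>i. if i = 1 then 2 else 0)
      \<or> (a, b) = (1, \<lambda>i. if i = 1 then 2 else if i = 2 then 1 else 0)
      \<or> (a, b) = (0, \<lambda>i. if 1 \<le> i \<and> i \<le> 4 then 1 else 0)
      \<or> (a, b) = cls_A3 \<or> (a, b) = cls_A4"
  shows "\<exists>z. reach k (a, b) z \<and> standard_form k z"
proof -
  have vanish: "b i = 0" if "k < i" for i using valid that by (simp add: valid_def)
  from shape show ?thesis
  proof (elim disjE)
    assume "(a, b) = (0, \<lambda>i. if i = 1 then 2 else 0)"
    then have "reach k (a, b) cls_A2" using reach_cls_A2[OF k] by simp
    then show ?thesis unfolding standard_form_def by blast
  next
    assume line: "(a, b) = (1, \<lambda>i. if i = 1 then 2 else if i = 2 then 1 else 0)"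
    then have "2 \<le> k" using vanish[of 2] by (cases "2 \<le> k") auto
    then have "reach k (a, b) cls_A1" using reach_cls_A1_from_line line by simp
    then show ?thesis unfolding standard_form_def by blast
  next
    assume four: "(a, b) = (0, \<lambda>i. if 1 \<le> i \<and> i \<le> 4 then 1 else 0)"
    then have "4 \<le> k" using vanish[of 4] by (cases "4 \<le> k") auto
    then have "reach k (a, b) cls_A1" using reach_cls_A1_from_four four by simp
    then show ?thesis unfolding standard_form_def by blast
  qed (rule exI[of _ "(a, b)"], simp add: standard_form_def)+
qed

lemma square_split:
  assumes "valid k (a, b)" "ip k (a, b) (a, b) = -4"
  shows "a * a + 4 = b 1 * b 1 + b 2 * b 2 + b 3 * b 3 + (\<Sum>i=4..k. b i * b i)"
proof -
  have "(\<Sum>i=1..k. b i * b i) = b 1 * b 1 + b 2 * b 2 + b 3 * b 3 + (\<Sum>i=4..k. b i * b i)"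
    by (rule sum_first_three) (use assms(1) in \<open>simp add: valid_def\<close>)
  then show ?thesis using assms(2) by (simp add: ip_def)
qed

text \<open>A normal class of square \<open>-4\<close> with \<open>3a \<le> b\<^sub>1 + b\<^sub>2 + b\<^sub>3\<close> has one of four coefficient
  patterns; the tail \<open>b\<^sub>4, b\<^sub>5, ...\<close> is recovered from its square sum.\<close>

lemma exceptional_shapes_rank_ge3:
  assumes valid: "valid k (a, b)" and normal: "normal (a, b)"
    and square: "ip k (a, b) (a, b) = -4" and large: "3 * a \<le> b 1 + b 2 + b 3"
  shows "(a, b) = (0, \<lambda>i. if i = 1 then 2 else 0)
      \<or> (a, b) = (1, \<lambda>i. if i = 1 then 2 else if i = 2 then 1 else 0)
      \<or> (a, b) = (0, \<lambda>i. if 1 \<le> i \<and> i \<le> 4 then 1 else 0)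
      \<or> (a, b) = cls_A4"
proof -
  define T where "T = (\<Sum>i=4..k. b i * b i)"
  have b0: "b 0 = 0" and zero: "\<forall>i>k. b i = 0" using valid by (auto simp: valid_def)
  have a0: "0 \<le> a" and nonneg: "\<forall>i. 0 \<le> b i"
    and antitone: "\<forall>i j. 1 \<le> i \<longrightarrow> i \<le> j \<longrightarrow> b j \<le> b i"
    using normal by (auto simp: normal_def)
  have eq: "a * a + 4 = b 1 * b 1 + b 2 * b 2 + b 3 * b 3 + T"
    using square_split[OF valid square] unfolding T_def .
  have "0 \<le> T" unfolding T_def by (simp add: sum_nonneg)
  have tail: "\<forall>i\<ge>4. b i = (if i < 4 + nat T then 1 else 0)" if "b 3 \<le> 1"
  proof (rule sorted_unit_tail[OF nonneg zero])
    show "\<forall>i j. 4 \<le> i \<longrightarrow> i \<le> j \<longrightarrow> b j \<le> b i" using antitone by auto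
    show "b 4 \<le> 1" using antitone[rule_format, of 3 4] that by simp
    show "(\<Sum>i=4..k. b i * b i) = int (nat T)" using \<open>0 \<le> T\<close> unfolding T_def by simp
  qed
  have "T = 0" if "b 3 = 0"
  proof -
    have "b 4 \<le> b 3" using antitone[rule_format, of 3 4] by simp
    then have "b 4 = 0" using nonneg that by (simp add: order_antisym)
    then show ?thesis using tail that \<open>0 \<le> T\<close> by (simp split: if_splits)
  qed
  then have cases: "(a = 0 \<and> b 1 = 2 \<and> b 2 = 0 \<and> b 3 = 0 \<and> T = 0)
      \<or> (a = 0 \<and> b 1 = 1 \<and> b 2 = 1 \<and> b 3 = 1 \<and> T = 1)
      \<or> (a = 1 \<and> b 1 = 2 \<and> b 2 = 1 \<and> b 3 = 0 \<and> T = 0)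
      \<or> (a = 1 \<and> b 1 = 1 \<and> b 2 = 1 \<and> b 3 = 1 \<and> T = 2)"
    using exceptional_triples[OF a0 _ _ _ large eq \<open>0 \<le> T\<close>] nonneg antitone by simp
  then have "b 3 \<le> 1" by auto
  have b_eq: "b = (\<lambda>i. if i = 1 then c1 else if i = 2 then c2 else if i = 3 then c3
      else if 4 \<le> i \<and> i < 4 + n then 1 else 0)"
    if "b 1 = c1" "b 2 = c2" "b 3 = c3" "nat T = n" for c1 c2 c3 n
  proof
    fix i
    show "b i = (if i = 1 then c1 else if i = 2 then c2 else if i = 3 then c3
        else if 4 \<le> i \<and> i < 4 + n then 1 else 0)"
      using tail[OF \<open>b 3 \<le> 1\<close>] b0 that by (cases "i \<le> 3") (auto simp: le_Suc_eq numeral_eq_Suc)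
  qed
  from cases show ?thesis
  proof (elim disjE conjE)
    assume "a = 0" "b 1 = 2" "b 2 = 0" "b 3 = 0" "T = 0"
    then show ?thesis using b_eq[of 2 0 0 0] by (simp add: fun_eq_iff)
  next
    assume "a = 0" "b 1 = 1" "b 2 = 1" "b 3 = 1" "T = 1"
    then show ?thesis using b_eq[of 1 1 1 1] by (simp add: fun_eq_iff)
  next
    assume "a = 1" "b 1 = 2" "b 2 = 1" "b 3 = 0" "T = 0"
    then show ?thesis using b_eq[of 2 1 0 0] by (simp add: fun_eq_iff)
  next
    assume "a = 1" "b 1 = 1" "b 2 = 1" "b 3 = 1" "T = 2"
    then show ?thesis using b_eq[of 1 1 1 2] by (simp add: fun_eq_iff cls_A4_def)
  qed
qed

text \<open>A normal class of square \<open>-4\<close> for \<open>k \<ge> 3\<close> is reduced, or exceptional, or the Cremona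
  reflection in \<open>H - E\<^sub>1 - E\<^sub>2 - E\<^sub>3\<close> moves it to \<open>a' = 2a - (b\<^sub>1 + b\<^sub>2 + b\<^sub>3)\<close> with
  \<open>|a'| < a\<close>.\<close>

lemma normal_class_rank_ge3:
  assumes k: "3 \<le> k" and valid: "valid k (a, b)" and normal: "normal (a, b)"
    and square: "ip k (a, b) (a, b) = -4"
  shows "(\<exists>z. reach k (a, b) z \<and> standard_form k z) \<or> (\<exists>z. reach k (a, b) z \<and> \<bar>fst z\<bar> < a)"
proof -
  consider (reduced) "b 1 + b 2 + b 3 \<le> a"
    | (descent) "a < b 1 + b 2 + b 3" "b 1 + b 2 + b 3 < 3 * a"
    | (exceptional) "3 * a \<le> b 1 + b 2 + b 3"
    by linarith
  then show ?thesis
  proof cases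
    case reduced
    then have "standard_form k (a, b)"
      using normal k by (auto simp: standard_form_def reduced_def normal_def)
    then show ?thesis by blast
  next
    case descent
    let ?d = "a - b 1 - b 2 - b 3"
    let ?z = "(a + ?d, \<lambda>m. if m = 1 \<or> m = 2 \<or> m = 3 then b m + ?d else b m)"
    have "reach k (a, b) ?z" using reach_cremona[of 1 k 2 3] k by simp
    moreover have "\<bar>fst ?z\<bar> < a" using descent by simp
    ultimately show ?thesis by blast
  next
    case exceptional
    then show ?thesis
      using exceptional_reach_standard[OF _ valid] exceptional_shapes_rank_ge3[OF valid normal square] k
      by auto
  qed
qed

lemma exceptional_shapes_rank_le2:
  assumes k: "k \<le> 2" and valid: "valid k (a, b)" and normal: "normal (a, b)"
    and square: "ip k (a, b) (a, b) = -4" and large: "2 * a \<le> b 1 + b 2"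
  shows "(a, b) = (0, \<lambda>i. if i = 1 then 2 else 0)
      \<or> (a, b) = (1, \<lambda>i. if i = 1 then 2 else if i = 2 then 1 else 0)
      \<or> (a, b) = cls_A3"
proof -
  have b0: "b 0 = 0" and zero: "\<forall>i>k. b i = 0" using valid by (auto simp: valid_def)
  have a0: "0 \<le> a" and nonneg: "\<forall>i. 0 \<le> b i" and "b 2 \<le> b 1"
    using normal by (auto simp: normal_def)
  have b_eq: "b = (\<lambda>i. if i = 1 then c1 else if i = 2 then c2 else 0)"
    if "b 1 = c1" "b 2 = c2" for c1 c2
  proof
    fix i
    show "b i = (if i = 1 then c1 else if i = 2 then c2 else 0)"
      using b0 zero k that by (cases "i \<le> 2") (auto simp: le_Suc_eq numeral_eq_Suc)
  qed
  have "a * a + 4 = b 1 * b 1 + b 2 * b 2"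
    using square_split[OF valid square] zero k by simp
  then have "(a = 0 \<and> b 1 = 2 \<and> b 2 = 0) \<or> (a = 1 \<and> b 1 = 2 \<and> b 2 = 1) \<or> (a = 2 \<and> b 1 = 2 \<and> b 2 = 2)"
    using exceptional_pairs[OF a0 _ \<open>b 2 \<le> b 1\<close> large] nonneg by simp
  then show ?thesis
  proof (elim disjE conjE)
    assume "a = 0" "b 1 = 2" "b 2 = 0"
    then show ?thesis using b_eq[of 2 0] by (simp add: fun_eq_iff)
  next
    assume "a = 1" "b 1 = 2" "b 2 = 1"
    then show ?thesis using b_eq[of 2 1] by (simp add: fun_eq_iff)
  next
    assume "a = 2" "b 1 = 2" "b 2 = 2"
    then show ?thesis using b_eq[of 2 2] by (simp add: fun_eq_iff cls_A3_def)
  qed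
qed

text \<open>For \<open>k \<le> 2\<close> a normal class of square \<open>-4\<close> has \<open>a < b\<^sub>1 + b\<^sub>2\<close>; it is exceptional, or
  (for \<open>k = 2\<close>) the reflection in \<open>H - E\<^sub>1 - E\<^sub>2\<close> moves it to \<open>a' = 3a - 2(b\<^sub>1 + b\<^sub>2)\<close> with
  \<open>|a'| < a\<close>.  For \<open>k = 1\<close> the descent case cannot occur.\<close>

lemma normal_class_rank_le2:
  assumes k: "1 \<le> k" "k \<le> 2" and valid: "valid k (a, b)" and normal: "normal (a, b)"
    and square: "ip k (a, b) (a, b) = -4"
  shows "(\<exists>z. reach k (a, b) z \<and> standard_form k z) \<or> (\<exists>z. reach k (a, b) z \<and> \<bar>fst z\<bar> < a)"
proof -
  have zero: "\<forall>i>k. b i = 0" using valid by (simp add: valid_def)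
  have a0: "0 \<le> a" and nonneg: "\<forall>i. 0 \<le> b i" using normal by (auto simp: normal_def)
  have eq: "a * a + 4 = b 1 * b 1 + b 2 * b 2"
    using square_split[OF valid square] zero k by simp
  have "a < b 1 + b 2"
  proof (rule ccontr)
    assume "\<not> a < b 1 + b 2"
    then have "(b 1 + b 2) * (b 1 + b 2) \<le> a * a" using nonneg a0 by (intro mult_mono) auto
    moreover have "0 \<le> b 1 * b 2" using nonneg by simp
    ultimately show False using eq by (simp add: algebra_simps)
  qed
  consider (descent) "b 1 + b 2 < 2 * a" | (exceptional) "2 * a \<le> b 1 + b 2" by linarith
  then show ?thesis
  proof cases
    case descent
    show ?thesis
    proof (cases "k = 2")
      case True
      let ?d = "a - b 1 - b 2"
      let ?z = "(a + 2 * ?d, \<lambda>m. if m = 1 \<or> m = 2 then b m + 2 * ?d else b m)"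
      have "reach k (a, b) ?z" using reach_line[of 1 k 2] True by simp
      moreover have "\<bar>fst ?z\<bar> < a" using descent \<open>a < b 1 + b 2\<close> by simp
      ultimately show ?thesis by blast
    next
      case False
      then have "b 2 = 0" using zero k by simp
      then have "(a + 1) * (a + 1) \<le> b 1 * b 1" using \<open>a < b 1 + b 2\<close> a0 by (intro mult_mono) auto
      then have "a \<le> 1" using eq \<open>b 2 = 0\<close> by (simp add: algebra_simps)
      then show ?thesis using descent \<open>a < b 1 + b 2\<close> \<open>b 2 = 0\<close> by linarith
    qed
  next
    case exceptional
    then show ?thesis
      using exceptional_reach_standard[OF k(1) valid] exceptional_shapes_rank_le2[OF k(2) valid normal square]
      by auto
  qed
qed

lemma reach_standard_form:
  assumes "1 \<le> k" "valid k x" "ip k x x = -4"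
  shows "\<exists>y. reach k x y \<and> standard_form k y"
  using assms(2,3)
proof (induction "nat \<bar>fst x\<bar>" arbitrary: x rule: less_induct)
  case less
  obtain y where xy: "reach k x y" and "fst y = \<bar>fst x\<bar>" "normal y"
    using reach_normal[OF less.prems(1)] .
  have y: "valid k (fst y, snd y)" "normal (fst y, snd y)" "ip k (fst y, snd y) (fst y, snd y) = -4"
    using reach_invariant[OF xy less.prems(1)] less.prems(2) \<open>normal y\<close> by simp_all
  have "(\<exists>z. reach k y z \<and> standard_form k z) \<or> (\<exists>z. reach k y z \<and> \<bar>fst z\<bar> < fst y)"
  proof (cases "3 \<le> k")
    case True
    then show ?thesis using normal_class_rank_ge3[OF True y] by simp
  next
    case False
    then show ?thesis using normal_class_rank_le2[OF assms(1) _ y] by simp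
  qed
  then show ?case
  proof
    assume "\<exists>z. reach k y z \<and> standard_form k z"
    then show ?case using xy by (meson rtranclp_trans)
  next
    assume "\<exists>z. reach k y z \<and> \<bar>fst z\<bar> < fst y"
    then obtain z where yz: "reach k y z" and smaller: "\<bar>fst z\<bar> < fst y" by blast
    have xz: "reach k x z" using xy yz by (rule rtranclp_trans)
    have "nat \<bar>fst z\<bar> < nat \<bar>fst x\<bar>" using smaller \<open>fst y = \<bar>fst x\<bar>\<close> by simp
    moreover have "valid k z" "ip k z z = -4"
      using reach_invariant[OF xz less.prems(1)] less.prems(2) by simp_all
    ultimately obtain w where "reach k z w" "standard_form k w" using less.hyps by blast
    then show ?case using xz by (meson rtranclp_trans)
  qed
qed

theorem lemma5p1:
  fixes k :: nat and A :: cls and D :: "(cls \<Rightarrow> cls) set"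
  assumes "k \<ge> 1"
    and "valid k A"
    and "ip k A A = -4"
    and "\<And>\<sigma>. sphere_refl k \<sigma> \<Longrightarrow> \<sigma> \<in> D"
    and "\<And>\<sigma> \<tau>. \<sigma> \<in> D \<Longrightarrow> \<tau> \<in> D \<Longrightarrow> \<sigma> \<circ> \<tau> \<in> D"
  shows "\<exists>\<sigma>\<in>D. (reduced k (\<sigma> A) \<and> k \<ge> 3)
                \<or> \<sigma> A = cls_A1 \<or> \<sigma> A = cls_A2 \<or> \<sigma> A = cls_A3 \<or> \<sigma> A = cls_A4"
proof -
  obtain y where "reach k A y" "standard_form k y"
    using reach_standard_form[OF assms(1-3)] by blast
  moreover obtain \<sigma> where "\<sigma> \<in> D" "\<sigma> A = y"
    using reach_realized[OF assms(4,5) \<open>reach k A y\<close>] by blast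
  ultimately show ?thesis unfolding standard_form_def by blast
qed

end
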